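(* Let $\alpha>0$ and $\beta\in\mathbb{R}$, and define $u:[0,1]\to\mathbb{R}$ by $u(x)=\beta-\alpha|x-\frac13|$ for $x<1/2$ and $u(x)=u(1-x)$ for $x\ge 1/2$ (equivalently $u(x)=f(x)$ for $x<1/2$, $u(x)=f(1-x)$ for $x\ge1/2$, where $f(x)=\alpha(x-\frac13)+\beta$ for $x<1/3$ and $f(x)=\alpha(\frac13-x)+\beta$ for $1/3\le x\le 1/2$). Let $A=u$ and $T(x)=2x\pmod 1$. Then for every $x\in[0,1]$, $$\max_{T(y)=x}[A(y)+u(y)]=\max\{2u(x/2),\,2u((x+1)/2)\}=u(x)+\beta,$$ so $u$ is a calibrated subaction for the potential $A=u$, with $m(A)=\beta$.
   Context: A calibrated subaction for $A$ is a continuous $V$ with $V(x)=\max_{T(y)=x}[A(y)+V(y)-m(A)]$, where $m(A)$ is the supremum of $\int A\,d\rho$ over $T$-invariant probabilities $\rho$. *)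

theory Defs
  imports "HOL-Probability.Probability"
begin

definition u_fun :: "real \<Rightarrow> real \<Rightarrow> real \<Rightarrow> real" where
  "u_fun \<alpha> \<beta> x = (if x < 1/2 then \<beta> - \<alpha> * \<bar>x - 1/3\<bar> else \<beta> - \<alpha> * \<bar>(1 - x) - 1/3\<bar>)"

definition Tmap :: "real \<Rightarrow> real" where
  "Tmap y = frac (2 * y)"

text \<open>Preimages of x under T, on the circle [0,1] with 0 and 1 identified.\<close>
definition preim :: "real \<Rightarrow> real set" where
  "preim x = {y \<in> {0..1}. Tmap y = frac x}"

definition T_invariant_prob :: "real measure \<Rightarrow> bool" where
  "T_invariant_prob \<rho> \<longleftrightarrow> prob_space \<rho> \<and> sets \<rho> = sets (restrict_space borel {0..1})
     \<and> Tmap \<in> measurable \<rho> \<rho> \<and> distr \<rho> \<rho> Tmap = \<rho>"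

definition m_pot :: "(real \<Rightarrow> real) \<Rightarrow> real" where
  "m_pot A = Sup {integral\<^sup>L \<rho> A | \<rho>. T_invariant_prob \<rho>}"

definition calibrated_subaction :: "(real \<Rightarrow> real) \<Rightarrow> (real \<Rightarrow> real) \<Rightarrow> bool" where
  "calibrated_subaction A V \<longleftrightarrow> continuous_on {0..1} V \<and>
     (\<forall>x\<in>{0..1}. V x = Max ((\<lambda>y. A y + V y - m_pot A) ` preim x))"

end

theory Submission
  imports Defs
begin

text \<open>
  On the circle, u is the tent profile beta - alpha * dist(x, {1/3, 2/3}), and the two preimages
  of x under the doubling map are x/2 and (x+1)/2. Since u(x/2) = beta - alpha/2 * |x - 2/3| and
  u((x+1)/2) = beta - alpha/2 * |x - 1/3|, twice the larger of these is exactly u(x) + beta, which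
  is the calibration equation with constant beta. The constant is m(u): we have u <= beta
  everywhere, so every integral is at most beta, and the invariant measure on the periodic orbit
  {1/3, 2/3}, where u = beta, attains it.
\<close>

lemma u_fun_eq: "u_fun \<alpha> \<beta> x = \<beta> - \<alpha> * min \<bar>x - 1/3\<bar> \<bar>x - 2/3\<bar>"
  unfolding u_fun_def by (auto simp: abs_if min_def)

lemma continuous_on_u_fun: "continuous_on S (u_fun \<alpha> \<beta>)"
  unfolding u_fun_eq[abs_def] by (intro continuous_intros)

lemma borel_measurable_u_fun: "u_fun \<alpha> \<beta> \<in> borel_measurable borel"
  using continuous_on_u_fun[of UNIV] by (simp add: borel_measurable_continuous_onI)

lemma u_fun_le: "0 \<le> \<alpha> \<Longrightarrow> u_fun \<alpha> \<beta> x \<le> \<beta>"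
  unfolding u_fun_eq by simp

lemma u_fun_0_eq_1: "u_fun \<alpha> \<beta> 0 = u_fun \<alpha> \<beta> 1"
  by (simp add: u_fun_eq)

lemma u_fun_halves:
  assumes "x \<in> {0..1}"
  shows "u_fun \<alpha> \<beta> (x/2) = \<beta> - \<alpha>/2 * \<bar>x - 2/3\<bar>"
    and "u_fun \<alpha> \<beta> ((x+1)/2) = \<beta> - \<alpha>/2 * \<bar>x - 1/3\<bar>"
  using assms by (auto simp: u_fun_def abs_if field_simps)

lemma max_u_fun_halves:
  assumes "0 \<le> \<alpha>" "x \<in> {0..1}"
  shows "max (2 * u_fun \<alpha> \<beta> (x/2)) (2 * u_fun \<alpha> \<beta> ((x+1)/2)) = u_fun \<alpha> \<beta> x + \<beta>"
proof -
  have max_antitone: "max (c - \<alpha> * a) (c - \<alpha> * b) = c - \<alpha> * min a b" for a b c :: real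
    using assms(1) by (cases "a \<le> b") (auto simp: mult_left_mono)
  have "max (2 * u_fun \<alpha> \<beta> (x/2)) (2 * u_fun \<alpha> \<beta> ((x+1)/2))
      = max (2 * \<beta> - \<alpha> * \<bar>x - 2/3\<bar>) (2 * \<beta> - \<alpha> * \<bar>x - 1/3\<bar>)"
    by (simp only: u_fun_halves[OF assms(2)] right_diff_distrib) simp
  also have "\<dots> = 2 * \<beta> - \<alpha> * min \<bar>x - 2/3\<bar> \<bar>x - 1/3\<bar>"
    by (rule max_antitone)
  also have "\<dots> = u_fun \<alpha> \<beta> x + \<beta>"
    by (simp add: u_fun_eq min.commute)
  finally show ?thesis .
qed

lemma frac_minus_1: "1 \<le> t \<Longrightarrow> t < 2 \<Longrightarrow> frac t = t - 1"
  using frac_1_eq[of "t - 1"] by simp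

lemma halves_mem_preim:
  assumes "x \<in> {0..1}"
  shows "x/2 \<in> preim x" and "(x+1)/2 \<in> preim x"
proof -
  have "2 * ((x+1)/2) = x + 1"
    by simp
  then have "Tmap ((x+1)/2) = frac x"
    by (simp only: Tmap_def frac_1_eq)
  then show "(x+1)/2 \<in> preim x"
    using assms by (simp add: preim_def)
  show "x/2 \<in> preim x"
    using assms by (simp add: preim_def Tmap_def)
qed

lemma mem_preim_cases:
  assumes "x \<in> {0..1}" "y \<in> preim x"
  shows "y = x/2 \<or> y = (x+1)/2 \<or> (x \<in> {0, 1} \<and> y \<in> {0, 1})"
proof -
  have y: "0 \<le> y" "y \<le> 1" and eq: "frac (2*y) = frac x"
    using assms(2) by (auto simp: preim_def Tmap_def)
  have frac_x: "frac x = (if x = 1 then 0 else x)"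
    using assms(1) by (auto simp: frac_eq)
  consider "2*y < 1" | "1 \<le> 2*y" "2*y < 2" | "y = 1"
    using y by linarith
  then show ?thesis
  proof cases
    case 1
    then show ?thesis using eq frac_x y by (auto split: if_splits)
  next
    case 2
    then show ?thesis using eq frac_x frac_minus_1[of "2*y"] by (auto split: if_splits)
  next
    case 3
    then show ?thesis using eq frac_x by (auto split: if_splits)
  qed
qed

lemma finite_preim:
  assumes "x \<in> {0..1}"
  shows "finite (preim x)"
proof (rule finite_subset)
  show "preim x \<subseteq> {x/2, (x+1)/2, 0, 1}"
    using mem_preim_cases[OF assms] by blast
qed simp

text \<open>The endpoints 0 and 1 are the same point of the circle, hence the hypothesis on g.\<close>

lemma Max_image_preim:
  assumes "g 0 = g 1" "x \<in> {0..1}"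
  shows "Max (g ` preim x) = max (g (x/2)) (g ((x+1)/2))"
proof (rule Max_eqI)
  show "finite (g ` preim x)"
    using finite_preim[OF assms(2)] by simp
  show "max (g (x/2)) (g ((x+1)/2)) \<in> g ` preim x"
    using halves_mem_preim[OF assms(2)] by (simp add: max_def)
  fix t
  assume "t \<in> g ` preim x"
  then obtain y where "t = g y" "y \<in> preim x"
    by blast
  with mem_preim_cases[OF assms(2)] consider "t = g (x/2)" | "t = g ((x+1)/2)" | "x \<in> {0, 1}" "t = g 0"
    using assms(1) by fastforce
  then show "t \<le> max (g (x/2)) (g ((x+1)/2))"
    by cases (auto simp: assms(1))
qed

lemma integral_u_fun_le:
  assumes "prob_space \<rho>" "sets \<rho> = sets (restrict_space borel {0..1})" "0 \<le> \<alpha>"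
  shows "integral\<^sup>L \<rho> (u_fun \<alpha> \<beta>) \<le> \<beta>"
proof -
  interpret prob_space \<rho> by (fact assms(1))
  have space: "space \<rho> = {0..1}"
    using sets_eq_imp_space_eq[OF assms(2)] by simp
  have "u_fun \<alpha> \<beta> \<in> borel_measurable \<rho>"
    using measurable_restrict_space1[OF borel_measurable_u_fun]
    by (simp add: measurable_cong_sets[OF assms(2) refl])
  moreover have "bounded (u_fun \<alpha> \<beta> ` {0..1})"
    by (intro compact_imp_bounded compact_continuous_image continuous_on_u_fun) simp
  then obtain B where "\<forall>x\<in>{0..1}. norm (u_fun \<alpha> \<beta> x) \<le> B"
    by (auto simp: bounded_iff)
  ultimately have "integrable \<rho> (u_fun \<alpha> \<beta>)"
    by (intro integrable_const_bound[where B = B]) (auto simp: space)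
  then have "integral\<^sup>L \<rho> (u_fun \<alpha> \<beta>) \<le> integral\<^sup>L \<rho> (\<lambda>_. \<beta>)"
    by (rule integral_mono) (simp_all add: u_fun_le assms(3))
  then show ?thesis
    by (simp add: prob_space)
qed

lemma Tmap_measurable: "Tmap \<in> borel_measurable borel"
  unfolding Tmap_def frac_def by measurable

lemma Tmap_bounds: "0 \<le> Tmap y" "Tmap y \<le> 1"
  by (simp_all add: Tmap_def frac_lt_1 less_imp_le)

lemma Tmap_measurable_unit:
  "Tmap \<in> measurable (restrict_space borel {0..1}) (restrict_space borel {0..1})"
  by (rule measurable_restrict_space3[OF Tmap_measurable])
     (auto simp: Tmap_bounds)

text \<open>
  A pmf becomes a Borel measure on [0,1] by pushing it forward along Tmap, which maps all reals
  into [0,1); the identity would not do, since it does not map the reals into [0,1].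
\<close>

lemma T_invariant_prob_distr_pmf:
  assumes "map_pmf Tmap p = p"
  shows "T_invariant_prob (distr (measure_pmf p) (restrict_space borel {0..1}) Tmap)"
    (is "T_invariant_prob ?\<rho>")
proof -
  let ?R = "restrict_space borel {0..1::real}"
  have Tmap_from_pmf: "Tmap \<in> measurable (measure_pmf p) ?R"
    by (auto simp: Tmap_bounds)
  have "distr ?\<rho> ?\<rho> Tmap = distr ?\<rho> ?R Tmap"
    by (rule distr_cong) auto
  also have "\<dots> = distr (measure_pmf p) ?R (Tmap \<circ> Tmap)"
    by (rule distr_distr[OF Tmap_measurable_unit Tmap_from_pmf])
  also have "\<dots> = distr (distr (measure_pmf p) (count_space UNIV) Tmap) ?R Tmap"
    by (rule distr_distr[symmetric]) (auto simp: Tmap_bounds)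
  also have "\<dots> = ?\<rho>"
    by (simp flip: map_pmf_rep_eq add: assms)
  finally have "distr ?\<rho> ?\<rho> Tmap = ?\<rho>" .
  moreover have "prob_space ?\<rho>"
    by (rule measure_pmf.prob_space_distr[OF Tmap_from_pmf])
  moreover have "Tmap \<in> measurable ?\<rho> ?\<rho>"
    using Tmap_measurable_unit by simp
  ultimately show ?thesis
    by (simp add: T_invariant_prob_def)
qed

lemma Tmap_third: "Tmap (1/3) = 2/3" "Tmap (2/3) = 1/3"
  using frac_minus_1[of "4/3"] by (simp_all add: Tmap_def frac_eq)

lemma map_pmf_Tmap_orbit: "map_pmf Tmap (pmf_of_set {1/3, 2/3}) = pmf_of_set {1/3, 2/3}"
  by (subst map_pmf_of_set_inj) (auto simp: Tmap_third insert_commute)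

lemma m_pot_u_fun:
  assumes "0 \<le> \<alpha>"
  shows "m_pot (u_fun \<alpha> \<beta>) = \<beta>"
  unfolding m_pot_def
proof (rule cSup_eq_maximum)
  let ?p = "pmf_of_set {1/3, 2/3::real}"
  let ?\<rho> = "distr (measure_pmf ?p) (restrict_space borel {0..1}) Tmap"
  have "integral\<^sup>L ?\<rho> (u_fun \<alpha> \<beta>) = integral\<^sup>L (measure_pmf ?p) (\<lambda>x. u_fun \<alpha> \<beta> (Tmap x))"
    by (rule integral_distr) (auto simp: Tmap_bounds
        intro: measurable_restrict_space1[OF borel_measurable_u_fun])
  also have "\<dots> = \<beta>"
    by (simp add: integral_pmf_of_set Tmap_third u_fun_eq)
  finally show "\<beta> \<in> {integral\<^sup>L \<rho> (u_fun \<alpha> \<beta>) | \<rho>. T_invariant_prob \<rho>}"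
    using T_invariant_prob_distr_pmf[OF map_pmf_Tmap_orbit] by force
  show "t \<le> \<beta>" if "t \<in> {integral\<^sup>L \<rho> (u_fun \<alpha> \<beta>) | \<rho>. T_invariant_prob \<rho>}" for t
    using that integral_u_fun_le[OF _ _ assms] by (auto simp: T_invariant_prob_def)
qed

theorem mainTheorem5:
  fixes \<alpha> \<beta> :: real
  assumes "\<alpha> > 0"
  shows "(\<forall>x\<in>{0..1}.
            Max ((\<lambda>y. u_fun \<alpha> \<beta> y + u_fun \<alpha> \<beta> y) ` preim x)
              = max (2 * u_fun \<alpha> \<beta> (x/2)) (2 * u_fun \<alpha> \<beta> ((x+1)/2))
          \<and> max (2 * u_fun \<alpha> \<beta> (x/2)) (2 * u_fun \<alpha> \<beta> ((x+1)/2)) = u_fun \<alpha> \<beta> x + \<beta>)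
         \<and> m_pot (u_fun \<alpha> \<beta>) = \<beta>
         \<and> calibrated_subaction (u_fun \<alpha> \<beta>) (u_fun \<alpha> \<beta>)"
proof -
  let ?u = "u_fun \<alpha> \<beta>"
  have m: "m_pot ?u = \<beta>"
    using assms by (simp add: m_pot_u_fun)
  have max_preim: "Max ((\<lambda>y. ?u y + ?u y) ` preim x) = max (2 * ?u (x/2)) (2 * ?u ((x+1)/2))"
    if "x \<in> {0..1}" for x
    using Max_image_preim[OF _ that, of "\<lambda>y. ?u y + ?u y"] by (simp add: u_fun_0_eq_1)
  have "?u x = Max ((\<lambda>y. ?u y + ?u y - m_pot ?u) ` preim x)" if "x \<in> {0..1}" for x
    using Max_image_preim[OF _ that, of "\<lambda>y. ?u y + ?u y - m_pot ?u"]
      max_u_fun_halves[of \<alpha> x \<beta>] assms that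
    by (simp add: u_fun_0_eq_1 m max_diff_distrib_left)
  then have "calibrated_subaction ?u ?u"
    by (simp add: calibrated_subaction_def continuous_on_u_fun)
  then show ?thesis
    using max_preim max_u_fun_halves[of \<alpha>] assms m by simp
qed

end
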